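(* Let $(A,\mathit{Con},\Delta)$ be a normal default structure (with trivial entailment) and let $\mid\!\sim_A$ be its skeptical nonmonotonic consequence relation. Then $\mid\!\sim_A$ satisfies cautious cut: for all finite sets $X,T,Y\in\mathit{Con}$ with $X\cup T\in\mathit{Con}$, if $X\mid\!\sim_A T$ and $X\cup T\mid\!\sim_A Y$, then $X\mid\!\sim_A Y$.
   Context: A normal default structure (with trivial entailment) is a triple $(A,\mathit{Con},\Delta)$ where $A$ is a set of tokens; $\mathit{Con}$ is a set of finite subsets of $A$ such that $\emptyset\in\mathit{Con}$, $X\subseteq Y\in\mathit{Con}$ implies $X\in\mathit{Con}$, and $\{a\}\in\mathit{Con}$ for every $a\in A$; an arbitrary subset of $A$ is called consistent (written $X\in\mathit{Con}$) if all its finite subsets lie in $\mathit{Con}$; and $\Delta$ is a set of normal defaults, each written $\frac{X:a}{a}$ with $X\in\mathit{Con}$ finite and $a\in A$. For a consistent set $x\subseteq A$ and any $S\subseteq A$, define $\phi(x,S,0)=x$ and $\phi(x,S,i+1)=\phi(x,S,i)\cup\{a\mid \frac{X:a}{a}\in\Delta,\ X\subseteq\phi(x,S,i),\ \{a\}\cup S\in\mathit{Con}\}$, and $\Phi(x,S)=\bigcup_{i\ge0}\phi(x,S,i)$. A set $y$ is an extension of $x$ if $\Phi(x,y)=y$. The skeptical consequence relation is defined for $X\in\mathit{Con}$ and $a\in A$ by $X\mid\!\sim_A a$ iff $a$ belongs to every extension of $X$; for a finite set $Y$, $X\mid\!\sim_A Y$ means $X\mid\!\sim_A b$ for every $b\in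 Y$. *)

theory Defs
  imports Main
begin

(* A normal default (X : a / a) is represented as the pair (X, a). *)

definition normal_default_structure ::
  "'a set \<Rightarrow> 'a set set \<Rightarrow> ('a set \<times> 'a) set \<Rightarrow> bool" where
  "normal_default_structure A Con Delta \<longleftrightarrow>
     (\<forall>X\<in>Con. finite X \<and> X \<subseteq> A) \<and>
     {} \<in> Con \<and>
     (\<forall>X Y. X \<subseteq> Y \<and> Y \<in> Con \<longrightarrow> X \<in> Con) \<and>
     (\<forall>a\<in>A. {a} \<in> Con) \<and>
     (\<forall>(X, a)\<in>Delta. finite X \<and> X \<in> Con \<and> a \<in> A)"

definition consistent :: "'a set set \<Rightarrow> 'a set \<Rightarrow> bool" where
  "consistent Con X \<longleftrightarrow> (\<forall>F. finite F \<and> F \<subseteq> X \<longrightarrow> F \<in> Con)"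

fun phi :: "'a set set \<Rightarrow> ('a set \<times> 'a) set \<Rightarrow> 'a set \<Rightarrow> 'a set \<Rightarrow> nat \<Rightarrow> 'a set" where
  "phi Con Delta x S 0 = x"
| "phi Con Delta x S (Suc i) = phi Con Delta x S i \<union>
     {a. \<exists>X. (X, a) \<in> Delta \<and> X \<subseteq> phi Con Delta x S i \<and> consistent Con (insert a S)}"

definition Phi :: "'a set set \<Rightarrow> ('a set \<times> 'a) set \<Rightarrow> 'a set \<Rightarrow> 'a set \<Rightarrow> 'a set" where
  "Phi Con Delta x S = (\<Union>i. phi Con Delta x S i)"

definition extension :: "'a set set \<Rightarrow> ('a set \<times> 'a) set \<Rightarrow> 'a set \<Rightarrow> 'a set \<Rightarrow> bool" where
  "extension Con Delta x y \<longleftrightarrow> Phi Con Delta x y = y"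

definition skeptical :: "'a set \<Rightarrow> 'a set set \<Rightarrow> ('a set \<times> 'a) set \<Rightarrow> 'a set \<Rightarrow> 'a \<Rightarrow> bool" where
  "skeptical A Con Delta X a \<longleftrightarrow> X \<in> Con \<and> a \<in> A \<and>
     (\<forall>y. extension Con Delta X y \<longrightarrow> a \<in> y)"

definition skeptical_set :: "'a set \<Rightarrow> 'a set set \<Rightarrow> ('a set \<times> 'a) set \<Rightarrow> 'a set \<Rightarrow> 'a set \<Rightarrow> bool" where
  "skeptical_set A Con Delta X Y \<longleftrightarrow> finite Y \<and> (\<forall>b\<in>Y. skeptical A Con Delta X b)"

end

theory Submission
  imports Defs
begin

text \<open>
  An extension \<open>y\<close> of \<open>X\<close> is the least set containing \<open>X\<close> and closed under the
  defaults whose conclusion is consistent with \<open>y\<close>. Since this closure condition refers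
  only to \<open>y\<close>, enlarging the base from \<open>X\<close> to any \<open>X'\<close> with \<open>X \<subseteq> X' \<subseteq> y\<close> leaves
  the least closed set unchanged, so \<open>y\<close> is also an extension of \<open>X'\<close>. Hence if every
  extension of \<open>X\<close> contains \<open>T\<close>, every extension of \<open>X\<close> is one of \<open>X \<union> T\<close> and so
  contains everything skeptically entailed by \<open>X \<union> T\<close>.
\<close>

lemma finite_subset_UN_mono:
  fixes f :: "nat \<Rightarrow> 'a set"
  assumes "mono f" "finite Z" "Z \<subseteq> (\<Union>i. f i)"
  shows "\<exists>j. Z \<subseteq> f j"
  using assms(2,3)
proof (induction Z rule: finite_induct)
  case empty
  then show ?case by blast
next
  case (insert z Z)
  then obtain j k where "Z \<subseteq> f j" "z \<in> f k" by blast
  then have "insert z Z \<subseteq> f (max j k)"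
    using monoD[OF \<open>mono f\<close>, of j "max j k"] monoD[OF \<open>mono f\<close>, of k "max j k"] by auto
  then show ?case by blast
qed

lemma mono_phi: "mono (phi Con Delta x S)"
  by (rule monoI, rule lift_Suc_mono_le) auto

lemma phi_mono_base: "x \<subseteq> x' \<Longrightarrow> phi Con Delta x S i \<subseteq> phi Con Delta x' S i"
  by (induction i) auto

lemma Phi_mono_base: "x \<subseteq> x' \<Longrightarrow> Phi Con Delta x S \<subseteq> Phi Con Delta x' S"
  unfolding Phi_def by (intro UN_mono order_refl phi_mono_base)

lemma base_subset_Phi: "x \<subseteq> Phi Con Delta x S"
  unfolding Phi_def by (metis UN_upper UNIV_I phi.simps(1))

lemma Phi_closed_default:
  assumes "(Z, a) \<in> Delta" "finite Z" "Z \<subseteq> Phi Con Delta x S" "consistent Con (insert a S)"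
  shows "a \<in> Phi Con Delta x S"
proof -
  obtain j where "Z \<subseteq> phi Con Delta x S j"
    using finite_subset_UN_mono[OF mono_phi assms(2)] assms(3) unfolding Phi_def by blast
  then have "a \<in> phi Con Delta x S (Suc j)"
    using assms(1,4) by auto
  then show ?thesis
    unfolding Phi_def by blast
qed

lemma Phi_least:
  assumes "x \<subseteq> z"
    and closed: "\<And>Z a. (Z, a) \<in> Delta \<Longrightarrow> Z \<subseteq> z \<Longrightarrow> consistent Con (insert a S) \<Longrightarrow> a \<in> z"
  shows "Phi Con Delta x S \<subseteq> z"
proof -
  have "phi Con Delta x S i \<subseteq> z" for i
    by (induction i) (use assms in auto)
  then show ?thesis
    unfolding Phi_def by blast
qed

lemma extension_enlarge_base:
  assumes finite_premises: "\<forall>(Z, a)\<in>Delta. finite Z"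
    and ext: "extension Con Delta X y" and "X \<subseteq> X'" "X' \<subseteq> y"
  shows "extension Con Delta X' y"
proof -
  have y: "Phi Con Delta X y = y"
    using ext by (simp add: extension_def)
  have "y \<subseteq> Phi Con Delta X' y"
    using Phi_mono_base[OF \<open>X \<subseteq> X'\<close>, of Con Delta y] y by simp
  moreover have "Phi Con Delta X' y \<subseteq> y"
  proof (rule Phi_least[OF \<open>X' \<subseteq> y\<close>])
    fix Z a
    assume "(Z, a) \<in> Delta" "Z \<subseteq> y" "consistent Con (insert a y)"
    then have "a \<in> Phi Con Delta X y"
      using finite_premises y by (intro Phi_closed_default) auto
    then show "a \<in> y"
      using y by simp
  qed
  ultimately show ?thesis
    by (simp add: extension_def)
qed

theorem theorem3:
  fixes A :: "'a set" and Con :: "'a set set" and Delta :: "('a set \<times> 'a) set"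
    and X T Y :: "'a set"
  assumes "normal_default_structure A Con Delta"
    and "finite X" and "finite T" and "finite Y"
    and "X \<in> Con" and "T \<in> Con" and "Y \<in> Con" and "X \<union> T \<in> Con"
    and "skeptical_set A Con Delta X T"
    and "skeptical_set A Con Delta (X \<union> T) Y"
  shows "skeptical_set A Con Delta X Y"
proof -
  have finite_premises: "\<forall>(Z, a)\<in>Delta. finite Z"
    using assms(1) unfolding normal_default_structure_def by blast
  have "extension Con Delta (X \<union> T) y" if "extension Con Delta X y" for y
  proof (rule extension_enlarge_base[OF finite_premises that])
    show "X \<union> T \<subseteq> y"
      using that base_subset_Phi[of X Con Delta y] assms(9)
      by (auto simp: extension_def skeptical_set_def skeptical_def)
  qed auto
  then show ?thesis
    using assms(4,5,10) by (auto simp: skeptical_set_def skeptical_def)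
qed

end
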